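(* Let $\lambda\ge\omega_3$ be a cardinal and let $F:[\lambda]^2\to\omega_1$ be an $\omega_1$-strongly unbounded function on $\lambda$. Then the forcing poset $\mathcal P=\langle P,\le\rangle$ defined in the context (using this $F$) satisfies the countable chain condition.
   Context: A function $F:[\lambda]^2\to\omega_1$ is $\omega_1$-strongly unbounded on $\lambda$ if for every ordinal $\delta<\omega_1$, every finite cardinal $\nu<\omega$ and every family $A\subseteq[\lambda]^\nu$ of pairwise disjoint sets with $|A|=\omega_1$, there are distinct $a,b\in A$ such that $F\{\alpha,\beta\}>\delta$ for all $\alpha\in a$, $\beta\in b$. For $s=\langle\alpha,\zeta\rangle$ write $\pi(s)=\alpha$, $\rho(s)=\zeta$. Let $T=(\omega_1\times\omega)\cup(\{\omega_1,\omega_1+1\}\times\lambda)$, with $T_\alpha=\{\alpha\}\times\omega$ for $\alpha<\omega_1$, $T_{\omega_1}=\{\omega_1\}\times\lambda$, $T_{\omega_1+1}=\{\omega_1+1\}\times\lambda$, and $t_\xi=\langle\omega_1+1,\xi\rangle$ for $\xi<\lambda$. Let $\mathbb B=\{S\}\cup\lambda$ (where $S$ is a new symbol), $\mathbb B_S=\omega_1\times\omega$ and $\mathbb B_\zeta=\{\omega_1\}\times[\omega\cdot\zeta,\omega\cdot\zeta+\omega)\cup\{t_\zeta\}$ for $\zeta<\lambda$; these partition $T$, and $\pi_B:T\to\mathbb B$ is defined by $x\in\mathbb B_{\pi_B(x)}$. $P$ consists of all triples $p=\langle X,\preceq,i\rangle$ such that: (P1) $X\in[T]^{<\omega}$; (P2)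 $\preceq$ is a partial order on $X$ such that $x\prec y$ implies $\pi(x)<\pi(y)$; (P3) if $X\cap\mathbb B_\zeta\ne\emptyset$ for some $\zeta<\lambda$, then $t_\zeta\in X$; (P4) if $x\in X\cap T_{\omega_1}\cap\mathbb B_\zeta$ for $\zeta<\lambda$, then $x\prec t_\zeta$ and $x\not\prec t_\xi$ for all $\xi\ne\zeta$ (with $t_\xi\in X$); (P5) if $s\neq t$ lie in the same $\mathbb B_b$ ($b\in\mathbb B$) with $\pi(s)=\pi(t)$, then $i\{s,t\}=\emptyset$; (P6) if $t\in X\cap T_{\alpha+1}$ for some $\alpha\le\omega_1$ and $s\prec t$, then there is $v\in X\cap T_\alpha$ with $s\preceq v\prec t$; (P7) $i:[X]^2\to[X]^{<\omega}$ satisfies $i\{x,y\}=\{x\}$ whenever $x\prec y$, and whenever $x,y\in X$ are $\preceq$-incomparable: (a) for all $u\in X$, ($u\preceq x$ and $u\preceq y$) iff $u\preceq v$ for some $v\in i\{x,y\}$; (b) if $x,y\in T_{\omega_1}\cup T_{\omega_1+1}$ and $\pi_B(x)\ne\pi_B(y)$, then $\pi[i\{x,y\}]\subseteq F\{\pi_B(x),\pi_B(y)\}$ (the ordinal $F\{\cdot,\cdot\}<\omega_1$ viewed as the set of smaller ordinals). Order: $\langle X',\preceq',i'\rangle\le\langle X,\preceq,i\rangle$ iff $X\subseteq X'$, $\preceq=\preceq'\cap(X\times X)$, and $i\subseteq i'$. *)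

theory Defs
  imports Main "HOL-Library.Countable_Set"
begin

text \<open>The ordinal omega_1 is modelled by a well-ordered type 'c of order type omega_1
  (uncountable, every proper initial segment countable); the cardinal lambda by a type 'l.\<close>

definition is_omega1_type :: "('c::wellorder) itself \<Rightarrow> bool" where
  "is_omega1_type _ \<longleftrightarrow> uncountable (UNIV :: 'c set) \<and> (\<forall>x::'c. countable {y. y < x})"

definition strongly_unbounded :: "('l set \<Rightarrow> 'c::wellorder) \<Rightarrow> bool" where
  "strongly_unbounded F \<longleftrightarrow>
     (\<forall>(\<delta>::'c) (\<nu>::nat) (A::'l set set).
        A \<subseteq> {a. finite a \<and> card a = \<nu>} \<and>
        (\<forall>a\<in>A. \<forall>b\<in>A. a \<noteq> b \<longrightarrow> a \<inter> b = {}) \<and>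
        ordIso2 (card_of A) (card_of (UNIV :: 'c set))
        \<longrightarrow> (\<exists>a\<in>A. \<exists>b\<in>A. a \<noteq> b \<and> (\<forall>\<alpha>\<in>a. \<forall>\<beta>\<in>b. \<delta> < F {\<alpha>, \<beta>})))"

text \<open>Levels = ordinals <= omega_1 + 1: countable ordinals, omega_1, omega_1+1.\<close>
datatype 'c lev = Ctbl 'c | W1 | W1s

fun lev_less :: "'c::wellorder lev \<Rightarrow> 'c lev \<Rightarrow> bool" where
  "lev_less (Ctbl a) (Ctbl b) = (a < b)"
| "lev_less (Ctbl a) W1 = True"
| "lev_less (Ctbl a) W1s = True"
| "lev_less W1 W1s = True"
| "lev_less _ _ = False"

definition lev_succ :: "'c::wellorder lev \<Rightarrow> 'c lev \<Rightarrow> bool" where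
  "lev_succ a b \<longleftrightarrow> lev_less a b \<and> \<not> (\<exists>c. lev_less a c \<and> lev_less c b)"

text \<open>Elements of T.  Lo a n = <a,n> in T_a (a<omega_1);
  Md z n = <omega_1, omega*z+n> in T_omega1 (z<lambda, n<omega; every xi<lambda is uniquely omega*z+n);
  Tp xi = t_xi = <omega_1+1, xi>.\<close>
datatype ('c,'l) node = Lo 'c nat | Md 'l nat | Tp 'l

fun lvl :: "('c,'l) node \<Rightarrow> 'c lev" where
  "lvl (Lo a n) = Ctbl a"
| "lvl (Md z n) = W1"
| "lvl (Tp x) = W1s"

datatype 'l blk = BS | Bk 'l

fun blk_of :: "('c,'l) node \<Rightarrow> 'l blk" where
  "blk_of (Lo a n) = BS"
| "blk_of (Md z n) = Bk z"
| "blk_of (Tp x) = Bk x"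

type_synonym ('c,'l) cond = "('c,'l) node set \<times> ('c,'l) node rel \<times> (('c,'l) node set \<Rightarrow> ('c,'l) node set)"

definition strict :: "'a rel \<Rightarrow> 'a \<Rightarrow> 'a \<Rightarrow> bool" where
  "strict le x y \<longleftrightarrow> (x, y) \<in> le \<and> x \<noteq> y"

text \<open>The conditions; i is a function on [X]^2, normalised to {} outside [X]^2.\<close>
definition Pcond :: "('l set \<Rightarrow> 'c::wellorder) \<Rightarrow> ('c,'l) cond \<Rightarrow> bool" where
  "Pcond F p \<longleftrightarrow> (case p of (X, le, i) \<Rightarrow>
     \<comment> \<open>P1\<close>
     finite X \<and>
     \<comment> \<open>P2\<close>
     le \<subseteq> X \<times> X \<and> partial_order_on X le \<and>
     (\<forall>x y. strict le x y \<longrightarrow> lev_less (lvl x) (lvl y)) \<and>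
     \<comment> \<open>P3\<close>
     (\<forall>z. (\<exists>x\<in>X. blk_of x = Bk z) \<longrightarrow> Tp z \<in> X) \<and>
     \<comment> \<open>P4\<close>
     (\<forall>z n. Md z n \<in> X \<longrightarrow> strict le (Md z n) (Tp z) \<and>
          (\<forall>\<xi>. \<xi> \<noteq> z \<and> Tp \<xi> \<in> X \<longrightarrow> \<not> strict le (Md z n) (Tp \<xi>))) \<and>
     \<comment> \<open>P5\<close>
     (\<forall>s\<in>X. \<forall>t\<in>X. s \<noteq> t \<and> blk_of s = blk_of t \<and> lvl s = lvl t \<longrightarrow> i {s, t} = {}) \<and>
     \<comment> \<open>P6\<close>
     (\<forall>t\<in>X. \<forall>a s. lev_succ a (lvl t) \<and> strict le s t \<longrightarrow>
          (\<exists>v\<in>X. lvl v = a \<and> (s, v) \<in> le \<and> strict le v t)) \<and>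
     \<comment> \<open>P7: i maps [X]^2 into [X]^{<omega}\<close>
     (\<forall>e. (\<exists>x\<in>X. \<exists>y\<in>X. x \<noteq> y \<and> e = {x, y}) \<longrightarrow> i e \<subseteq> X \<and> finite (i e)) \<and>
     (\<forall>e. \<not> (\<exists>x\<in>X. \<exists>y\<in>X. x \<noteq> y \<and> e = {x, y}) \<longrightarrow> i e = {}) \<and>
     (\<forall>x y. strict le x y \<longrightarrow> i {x, y} = {x}) \<and>
     (\<forall>x\<in>X. \<forall>y\<in>X. (x, y) \<notin> le \<and> (y, x) \<notin> le \<longrightarrow>
        (\<forall>u\<in>X. ((u, x) \<in> le \<and> (u, y) \<in> le) \<longleftrightarrow> (\<exists>v\<in>i {x, y}. (u, v) \<in> le)) \<and>
        (\<forall>z z'. blk_of x = Bk z \<and> blk_of y = Bk z' \<and>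
            lvl x \<in> {W1, W1s} \<and> lvl y \<in> {W1, W1s} \<and> z \<noteq> z' \<longrightarrow>
            (\<forall>v\<in>i {x, y}. \<exists>\<gamma>. lvl v = Ctbl \<gamma> \<and> \<gamma> < F {z, z'}))))"

definition Pset :: "('l set \<Rightarrow> 'c::wellorder) \<Rightarrow> ('c,'l) cond set" where
  "Pset F = {p. Pcond F p}"

definition Pleq :: "('c,'l) cond \<Rightarrow> ('c,'l) cond \<Rightarrow> bool" where
  "Pleq q p \<longleftrightarrow> (case q of (X', le', i') \<Rightarrow> case p of (X, le, i) \<Rightarrow>
      X \<subseteq> X' \<and> le = le' \<inter> (X \<times> X) \<and>
      (\<forall>x\<in>X. \<forall>y\<in>X. x \<noteq> y \<longrightarrow> i' {x, y} = i {x, y}))"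

definition compatible :: "('l set \<Rightarrow> 'c::wellorder) \<Rightarrow> ('c,'l) cond \<Rightarrow> ('c,'l) cond \<Rightarrow> bool" where
  "compatible F p q \<longleftrightarrow> (\<exists>r\<in>Pset F. Pleq r p \<and> Pleq r q)"

definition ccc :: "('l set \<Rightarrow> 'c::wellorder) \<Rightarrow> bool" where
  "ccc F \<longleftrightarrow> (\<forall>A \<subseteq> Pset F. (\<forall>p\<in>A. \<forall>q\<in>A. p \<noteq> q \<longrightarrow> \<not> compatible F p q) \<longrightarrow> countable A)"

end

theory Submission
  imports Defs
begin

text \<open>Thin out an uncountable family of conditions to an uncountable subfamily in which any two
  members share only a finite root R containing all their nodes of equal block and level, agree
  on R in order and meets (there are only countably many possibilities, as meets of nodes of R
  lie on countably many levels), and have pairwise disjoint sets of new top nodes t_\<xi> of equal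
  size. Strong unboundedness of F gives two members p, q such that F{\<xi>, \<eta>} exceeds all
  countable levels of R whenever t_\<xi> is new in p and t_\<eta> is new in q. Such p and q amalgamate:
  the union of their nodes, with the order generated by both and with the common lower bounds
  as the meet of a new mixed pair, is a condition: such a lower bound lies below a meet in one
  of the two conditions or below a node of R, hence on a level below F{\<xi>, \<eta>}.\<close>

section \<open>Uncountable families\<close>

lemma uncountable_fiber:
  assumes "uncountable I" and "countable C" and "\<And>i. i \<in> I \<Longrightarrow> g i \<in> C"
  obtains c where "uncountable {i\<in>I. g i = c}"
proof -
  have I: "I \<subseteq> (\<Union>c\<in>C. {i\<in>I. g i = c})" using assms(3) by blast
  show ?thesis
  proof (rule ccontr)
    assume "\<not> thesis"
    then have "countable {i\<in>I. g i = c}" for c using that by blast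
    then have "countable (\<Union>c\<in>C. {i\<in>I. g i = c})" using assms(2) by blast
    with I assms(1) show False using countable_subset by blast
  qed
qed

lemma uncountable_two_elements:
  assumes "uncountable S"
  obtains p q where "p \<in> S" "q \<in> S" "p \<noteq> q"
proof -
  have "\<not> S \<subseteq> {p}" for p
    using assms countable_subset[of S "{p}"] by auto
  then show ?thesis using that by blast
qed

definition delta_system :: "'i set \<Rightarrow> ('i \<Rightarrow> 'k set) \<Rightarrow> 'k set \<Rightarrow> bool" where
  "delta_system J f K \<longleftrightarrow> (\<forall>i\<in>J. \<forall>j\<in>J. i \<noteq> j \<longrightarrow> f i \<inter> f j = K)"

lemma uncountable_disjoint_subfamily:
  assumes I: "uncountable I" and fin: "\<And>i. i \<in> I \<Longrightarrow> finite (f i)"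
    and thin: "\<And>k. countable {i\<in>I. k \<in> f i}"
  obtains J where "J \<subseteq> I" "uncountable J" "delta_system J f {}"
proof -
  define D where "D = {J. J \<subseteq> I \<and> delta_system J f {}}"
  have "\<Union>C \<in> D" if C: "C \<in> chains D" for C
    unfolding D_def delta_system_def
  proof (intro CollectI conjI ballI impI)
    show "\<Union>C \<subseteq> I" using C by (auto simp: chains_def D_def)
  next
    fix i j assume "i \<in> \<Union>C" "j \<in> \<Union>C" "i \<noteq> j"
    then obtain A B where AB: "A \<in> C" "B \<in> C" "i \<in> A" "j \<in> B" by blast
    with C have "A \<subseteq> B \<or> B \<subseteq> A" by (auto simp: chains_def chain_subset_def)
    with AB obtain Z where "Z \<in> C" "i \<in> Z" "j \<in> Z" by blast
    with C \<open>i \<noteq> j\<close> show "f i \<inter> f j = {}"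
      unfolding chains_def D_def delta_system_def by blast
  qed
  then obtain M where M: "M \<in> D" and maximal: "\<And>J. J \<in> D \<Longrightarrow> M \<subseteq> J \<Longrightarrow> J = M"
    using Zorn_Lemma[of D] by blast
  have "uncountable M"
  proof
    assume "countable M"
    \<comment> \<open>then only countably many members of I meet some f j with j \<in> M\<close>
    moreover have "countable (\<Union>i\<in>M. f i)"
      using \<open>countable M\<close> by (rule countable_UN) (use M fin in \<open>auto simp: D_def intro: countable_finite\<close>)
    ultimately have "countable (M \<union> (\<Union>k\<in>(\<Union>i\<in>M. f i). {i\<in>I. k \<in> f i}))"
      using thin by blast
    then have "\<not> I \<subseteq> M \<union> (\<Union>k\<in>(\<Union>i\<in>M. f i). {i\<in>I. k \<in> f i})"
      using I countable_subset by blast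
    then obtain i where i: "i \<in> I" "i \<notin> M" "\<forall>j\<in>M. f i \<inter> f j = {}"
      by blast
    with M have "insert i M \<in> D" unfolding D_def delta_system_def by blast
    with maximal i show False by blast
  qed
  with M show ?thesis using that unfolding D_def by blast
qed

lemma delta_system_card:
  assumes "uncountable I" and "\<And>i. i \<in> I \<Longrightarrow> finite (f i) \<and> card (f i) = n"
  obtains J K where "J \<subseteq> I" "uncountable J" "delta_system J f K"
  using assms
proof (induction n arbitrary: I f thesis)
  case 0
  then have "f i = {}" if "i \<in> I" for i using that by (meson card_0_eq)
  then have "delta_system I f {}" by (simp add: delta_system_def)
  with "0.prems"(1,2) show ?case by blast
next
  case (Suc n)
  show ?case
  proof (cases "\<exists>k. uncountable {i\<in>I. k \<in> f i}")
    case True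
    then obtain k where k: "uncountable {i\<in>I. k \<in> f i}" by blast
    have card_minus: "finite (f i - {k}) \<and> card (f i - {k}) = n" if "i \<in> {i\<in>I. k \<in> f i}" for i
      using that Suc.prems(3) by simp
    obtain J K where J: "J \<subseteq> {i\<in>I. k \<in> f i}" "uncountable J"
      and delta: "delta_system J (\<lambda>i. f i - {k}) K"
      by (rule Suc.IH[OF _ k card_minus])
    have "f i \<inter> f j = insert k K" if "i \<in> J" "j \<in> J" "i \<noteq> j" for i j
    proof -
      have "(f i - {k}) \<inter> (f j - {k}) = K" "k \<in> f i" "k \<in> f j"
        using delta J(1) that unfolding delta_system_def by auto
      then show ?thesis by blast
    qed
    then have "delta_system J f (insert k K)" unfolding delta_system_def by blast
    with J Suc.prems(1) show ?thesis by blast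
  next
    case False
    have "finite (f i)" if "i \<in> I" for i using Suc.prems(3)[OF that] by blast
    moreover have "countable {i\<in>I. k \<in> f i}" for k using False by blast
    ultimately obtain J where "J \<subseteq> I" "uncountable J" "delta_system J f {}"
      by (rule uncountable_disjoint_subfamily[OF Suc.prems(2)])
    with Suc.prems(1) show ?thesis by blast
  qed
qed

theorem delta_system_lemma:
  assumes "uncountable I" and "\<And>i. i \<in> I \<Longrightarrow> finite (f i)"
  obtains J K where "J \<subseteq> I" "uncountable J" "delta_system J f K"
proof -
  obtain n where n: "uncountable {i\<in>I. card (f i) = n}"
    using uncountable_fiber[OF assms(1), of UNIV "\<lambda>i. card (f i)"] by blast
  moreover have "finite (f i) \<and> card (f i) = n" if "i \<in> {i\<in>I. card (f i) = n}" for i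
    using that assms(2) by simp
  ultimately obtain J K where "J \<subseteq> {i\<in>I. card (f i) = n}" "uncountable J" "delta_system J f K"
    by (rule delta_system_card)
  then show ?thesis using that by blast
qed

lemma omega1_embeds_into_uncountable:
  fixes B :: "'x set"
  assumes om: "is_omega1_type TYPE('c::wellorder)" and B: "uncountable B"
  obtains f :: "'c::wellorder \<Rightarrow> 'x" where "inj f" "range f \<subseteq> B"
proof -
  define R where "R = {(x::'c, y). x < y}"
  define G where "G = (\<lambda>(g::'c \<Rightarrow> 'x) (x::'c). SOME b. b \<in> B \<and> b \<notin> g ` {y. y < x})"
  define f where "f = wfrec R G"
  have f: "f x \<in> B \<and> f x \<notin> f ` {y. y < x}" for x
  proof -
    have "wf R" unfolding R_def by (rule wf)
    then have "f x = G (cut f R x) x" unfolding f_def by (rule wfrec)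
    moreover have "cut f R x ` {y. y < x} = f ` {y. y < x}"
      by (auto simp: cut_apply R_def)
    ultimately have eq: "f x = (SOME b. b \<in> B \<and> b \<notin> f ` {y. y < x})"
      by (simp add: G_def)
    have "countable (f ` {y. y < x})"
      using om by (simp add: is_omega1_type_def)
    then have "\<not> B \<subseteq> f ` {y. y < x}"
      using B countable_subset by blast
    then have "\<exists>b. b \<in> B \<and> b \<notin> f ` {y. y < x}" by blast
    then show ?thesis unfolding eq by (rule someI_ex)
  qed
  have "inj f"
  proof (rule injI)
    fix x y :: 'c assume eq: "f x = f y"
    show "x = y"
    proof (rule ccontr)
      assume "x \<noteq> y"
      then have "f x \<in> f ` {z. z < y} \<or> f y \<in> f ` {z. z < x}"
        by (cases x y rule: linorder_cases) auto
      with eq f[of x] f[of y] show False by simp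
    qed
  qed
  with f that show ?thesis by blast
qed

lemma omega1_sized_subset:
  fixes B :: "'x set"
  assumes om: "is_omega1_type TYPE('c::wellorder)" and B: "uncountable B"
  obtains B' where "B' \<subseteq> B" "ordIso2 (card_of B') (card_of (UNIV :: 'c set))"
proof -
  from om B obtain g :: "'c \<Rightarrow> 'x" where g: "inj g" "range g \<subseteq> B"
    by (rule omega1_embeds_into_uncountable)
  from g(1) have "bij_betw g UNIV (range g)" by (simp add: bij_betw_def)
  then have "ordIso2 (card_of (UNIV :: 'c set)) (card_of (range g))"
    unfolding card_of_ordIso[symmetric] by blast
  then have "ordIso2 (card_of (range g)) (card_of (UNIV :: 'c set))"
    by (rule ordIso_symmetric)
  with g(2) show ?thesis by (rule that)
qed

lemma strongly_unboundedD:
  fixes F :: "'l set \<Rightarrow> 'c::wellorder"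
  assumes "strongly_unbounded F" and "A \<subseteq> {a. finite a \<and> card a = \<nu>}"
    and "\<forall>a\<in>A. \<forall>b\<in>A. a \<noteq> b \<longrightarrow> a \<inter> b = {}" and "ordIso2 (card_of A) (card_of (UNIV :: 'c set))"
  obtains a b where "a \<in> A" "b \<in> A" "a \<noteq> b" "\<forall>\<alpha>\<in>a. \<forall>\<beta>\<in>b. \<delta> < F {\<alpha>, \<beta>}"
proof -
  have "\<exists>a\<in>A. \<exists>b\<in>A. a \<noteq> b \<and> (\<forall>\<alpha>\<in>a. \<forall>\<beta>\<in>b. \<delta> < F {\<alpha>, \<beta>})"
    using assms(1)[unfolded strongly_unbounded_def, THEN spec, of \<delta>, THEN spec, of \<nu>, THEN spec, of A]
      assms(2-4) by blast
  then show ?thesis using that by blast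
qed

text \<open>For m = 0 the sets N p are all empty, so they do not form a family of size \<omega>_1 as the
  definition requires; but then the conclusion is trivial.\<close>

lemma strongly_unbounded_indexed:
  fixes F :: "'l set \<Rightarrow> 'c::wellorder" and N :: "'p \<Rightarrow> 'l set"
  assumes om: "is_omega1_type TYPE('c)" and SU: "strongly_unbounded F" and A: "uncountable A"
    and card: "\<And>p. p \<in> A \<Longrightarrow> finite (N p) \<and> card (N p) = m"
    and disjoint: "delta_system A N {}"
  obtains p q where "p \<in> A" "q \<in> A" "p \<noteq> q" "\<forall>\<alpha>\<in>N p. \<forall>\<beta>\<in>N q. \<delta> < F {\<alpha>, \<beta>}"
proof (cases "m = 0")
  case True
  obtain p q where "p \<in> A" "q \<in> A" "p \<noteq> q" using A by (rule uncountable_two_elements)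
  moreover have "N p = {}" using card[OF \<open>p \<in> A\<close>] True by auto
  ultimately show ?thesis using that by blast
next
  case False
  then have nonempty: "N p \<noteq> {}" if "p \<in> A" for p using card[OF that] by auto
  have disjoint': "N p \<inter> N q = {}" if "p \<in> A" "q \<in> A" "p \<noteq> q" for p q
    using disjoint that unfolding delta_system_def by blast
  have "inj_on N A"
  proof (rule inj_onI)
    fix p q assume pq: "p \<in> A" "q \<in> A" "N p = N q"
    with nonempty disjoint' show "p = q" by fastforce
  qed
  then have "uncountable (N ` A)" using A countable_image_inj_on by blast
  with om obtain B where B: "B \<subseteq> N ` A" "ordIso2 (card_of B) (card_of (UNIV :: 'c set))"
    by (rule omega1_sized_subset)
  have "B \<subseteq> {a. finite a \<and> card a = m}" using B(1) card by blast
  moreover have "\<forall>a\<in>B. \<forall>b\<in>B. a \<noteq> b \<longrightarrow> a \<inter> b = {}" using B(1) disjoint' by blast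
  ultimately obtain a b where ab: "a \<in> B" "b \<in> B" "a \<noteq> b"
    and separated: "\<forall>\<alpha>\<in>a. \<forall>\<beta>\<in>b. \<delta> < F {\<alpha>, \<beta>}"
    by (rule strongly_unboundedD[OF SU _ _ B(2)])
  with B(1) obtain p q where "p \<in> A" "q \<in> A" "a = N p" "b = N q"
    by (meson image_iff subsetD)
  with ab(3) separated show ?thesis by (intro that) auto
qed

section \<open>Conditions\<close>

lemma lev_less_trans: "lev_less a b \<Longrightarrow> lev_less b c \<Longrightarrow> lev_less a c"
  by (cases a; cases b; cases c) auto

lemma lev_less_irrefl: "\<not> lev_less a a"
  by (cases a) auto

lemma lev_less_Ctbl: "lev_less a (Ctbl b) \<Longrightarrow> \<exists>g. a = Ctbl g \<and> g < b"
  by (cases a) auto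

lemma lev_less_W1_iff: "lev_less W1 a \<longleftrightarrow> a = W1s"
  by (cases a) auto

lemma lvl_eq_W1s_iff: "lvl v = W1s \<longleftrightarrow> (\<exists>z. v = Tp z)"
  by (cases v) auto

locale condition =
  fixes F :: "'l set \<Rightarrow> 'c::wellorder" and X :: "('c,'l) node set"
    and le :: "('c,'l) node rel" and i :: "('c,'l) node set \<Rightarrow> ('c,'l) node set"
  assumes Pcond: "Pcond F (X, le, i)"
begin

lemma finite_nodes: "finite X"
  using Pcond by (simp add: Pcond_def)

lemma le_subset: "le \<subseteq> X \<times> X"
  using Pcond by (simp add: Pcond_def)

lemma le_nodesD: "(x, y) \<in> le \<Longrightarrow> x \<in> X \<and> y \<in> X"
  using le_subset by blast

lemma partial_order: "partial_order_on X le"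
  using Pcond by (simp add: Pcond_def)

lemma refl_le: "x \<in> X \<Longrightarrow> (x, x) \<in> le"
  using partial_order by (auto simp: partial_order_on_def preorder_on_def refl_on_def)

lemma trans_le: "(x, y) \<in> le \<Longrightarrow> (y, z) \<in> le \<Longrightarrow> (x, z) \<in> le"
  using partial_order unfolding partial_order_on_def preorder_on_def trans_def by blast

lemma level_less: "(x, y) \<in> le \<Longrightarrow> x \<noteq> y \<Longrightarrow> lev_less (lvl x) (lvl y)"
  using Pcond by (simp add: Pcond_def strict_def)

lemma top_in_nodes: "x \<in> X \<Longrightarrow> blk_of x = Bk z \<Longrightarrow> Tp z \<in> X"
  using Pcond unfolding Pcond_def by auto

lemma Md_below_top: "Md z n \<in> X \<Longrightarrow> strict le (Md z n) (Tp z)"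
  using Pcond by (simp add: Pcond_def)

lemma Md_not_below_other_top:
  "Md z n \<in> X \<Longrightarrow> \<xi> \<noteq> z \<Longrightarrow> Tp \<xi> \<in> X \<Longrightarrow> \<not> strict le (Md z n) (Tp \<xi>)"
  using Pcond by (simp add: Pcond_def)

lemma meet_same_key:
  "s \<in> X \<Longrightarrow> t \<in> X \<Longrightarrow> s \<noteq> t \<Longrightarrow> blk_of s = blk_of t \<Longrightarrow> lvl s = lvl t \<Longrightarrow> i {s, t} = {}"
  using Pcond by (simp add: Pcond_def)

lemma predecessor_level:
  "t \<in> X \<Longrightarrow> lev_succ a (lvl t) \<Longrightarrow> strict le s t \<Longrightarrow>
    \<exists>v\<in>X. lvl v = a \<and> (s, v) \<in> le \<and> strict le v t"
  using Pcond by (simp add: Pcond_def)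

lemma meet_subset_nodes: "x \<in> X \<Longrightarrow> y \<in> X \<Longrightarrow> x \<noteq> y \<Longrightarrow> i {x, y} \<subseteq> X \<and> finite (i {x, y})"
proof -
  assume "x \<in> X" "y \<in> X" "x \<noteq> y"
  moreover have "\<forall>e. (\<exists>x\<in>X. \<exists>y\<in>X. x \<noteq> y \<and> e = {x, y}) \<longrightarrow> i e \<subseteq> X \<and> finite (i e)"
    using Pcond by (simp add: Pcond_def)
  ultimately show ?thesis by blast
qed

lemma meet_non_pair: "\<not> (\<exists>x\<in>X. \<exists>y\<in>X. x \<noteq> y \<and> e = {x, y}) \<Longrightarrow> i e = {}"
  using Pcond by (simp add: Pcond_def)

lemma meet_comparable: "strict le x y \<Longrightarrow> i {x, y} = {x}"
  using Pcond by (simp add: Pcond_def)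

lemma lower_bounds_meet:
  "x \<in> X \<Longrightarrow> y \<in> X \<Longrightarrow> (x, y) \<notin> le \<Longrightarrow> (y, x) \<notin> le \<Longrightarrow> u \<in> X \<Longrightarrow>
    ((u, x) \<in> le \<and> (u, y) \<in> le) \<longleftrightarrow> (\<exists>v\<in>i {x, y}. (u, v) \<in> le)"
  using Pcond by (simp add: Pcond_def)

lemma meet_level_bound:
  "x \<in> X \<Longrightarrow> y \<in> X \<Longrightarrow> (x, y) \<notin> le \<Longrightarrow> (y, x) \<notin> le \<Longrightarrow>
    blk_of x = Bk z \<Longrightarrow> blk_of y = Bk z' \<Longrightarrow> lvl x \<in> {W1, W1s} \<Longrightarrow> lvl y \<in> {W1, W1s} \<Longrightarrow>
    z \<noteq> z' \<Longrightarrow> v \<in> i {x, y} \<Longrightarrow> \<exists>g. lvl v = Ctbl g \<and> g < F {z, z'}"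
  using Pcond by (simp add: Pcond_def)

lemma meet_lower_bound:
  assumes "x \<in> X" "y \<in> X" "(x, y) \<notin> le" "(y, x) \<notin> le" "v \<in> i {x, y}"
  shows "(v, x) \<in> le \<and> (v, y) \<in> le"
proof -
  from assms have "x \<noteq> y" using refl_le by blast
  with assms have "v \<in> X" using meet_subset_nodes by blast
  with assms show ?thesis using lower_bounds_meet refl_le by blast
qed

lemma Tp_le: "(Tp w, c) \<in> le \<Longrightarrow> c = Tp w"
  using level_less[of "Tp w" c] by (cases c) auto

lemma Md_le_cases:
  assumes le: "(Md z n, c) \<in> le"
  shows "c = Md z n \<or> c = Tp z"
proof (rule ccontr)
  assume ne: "\<not> ?thesis"
  with le have "lev_less W1 (lvl c)" using level_less by fastforce
  then obtain w where c: "c = Tp w" by (auto simp: lev_less_W1_iff lvl_eq_W1s_iff)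
  with ne have "w \<noteq> z" by simp
  moreover from le c have "Md z n \<in> X" "Tp w \<in> X" using le_nodesD by auto
  ultimately have "\<not> strict le (Md z n) (Tp w)" using Md_not_below_other_top by blast
  with le c show False by (simp add: strict_def)
qed

lemma below_own_top: "x \<in> X \<Longrightarrow> blk_of x = Bk z \<Longrightarrow> (x, Tp z) \<in> le"
  using Md_below_top refl_le by (cases x) (auto simp: strict_def)

end

definition key :: "('c, 'l) node \<Rightarrow> 'l blk \<times> 'c lev" where
  "key x = (blk_of x, lvl x)"

lemma countable_key_fiber: "countable {x :: ('c, 'l) node. key x = k}"
proof (rule countableI)
  let ?code = "\<lambda>x :: ('c, 'l) node. case x of Lo a n \<Rightarrow> 2 * n | Md z n \<Rightarrow> 2 * n + 1 | Tp z \<Rightarrow> 0"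
  show "inj_on ?code {x. key x = k}"
  proof (rule inj_onI)
    fix x y :: "('c, 'l) node" assume "x \<in> {x. key x = k}" "y \<in> {x. key x = k}" "?code x = ?code y"
    then have "key x = key y" "?code x = ?code y" by simp_all
    then show "x = y" by (cases x; cases y) (auto simp: key_def)
  qed
qed

lemma countable_key_vimage:
  fixes K :: "('l blk \<times> 'c lev) set"
  assumes "finite K"
  shows "countable (key -` K :: ('c, 'l) node set)"
proof -
  from assms have "countable (\<Union>k\<in>K. {x :: ('c, 'l) node. key x = k})"
    by (intro countable_UN countable_finite countable_key_fiber)
  moreover have "key -` K = (\<Union>k\<in>K. {x. key x = k})" by blast
  ultimately show ?thesis by simp
qed

lemma not_Ctbl_imp_block: "\<forall>a. lvl x \<noteq> Ctbl a \<Longrightarrow> \<exists>z. blk_of x = Bk z \<and> lvl x \<in> {W1, W1s}"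
  by (cases x) auto

text \<open>Apart from the two nodes themselves, the meet of two nodes of R consists of nodes on levels
  below one of these bounds.\<close>

definition level_bounds :: "('l set \<Rightarrow> 'c) \<Rightarrow> ('c, 'l) node set \<Rightarrow> 'c set" where
  "level_bounds F R =
     Ctbl -` lvl ` R \<union> (\<lambda>(z, z'). F {z, z'}) ` (Bk -` blk_of ` R \<times> Bk -` blk_of ` R)"

definition nodes_below :: "'c::wellorder set \<Rightarrow> ('c, 'l) node set" where
  "nodes_below \<Gamma> = {v. \<exists>g. lvl v = Ctbl g \<and> (\<exists>\<gamma>\<in>\<Gamma>. g < \<gamma>)}"

lemma finite_level_bounds: "finite R \<Longrightarrow> finite (level_bounds F R)"
  unfolding level_bounds_def
  by (intro finite_UnI finite_imageI finite_cartesian_product finite_vimageI) (auto simp: inj_def)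

lemma level_bounds_mono: "R \<subseteq> R' \<Longrightarrow> level_bounds F R \<subseteq> level_bounds F R'"
  unfolding level_bounds_def by blast

lemma nodes_below_mono: "\<Gamma> \<subseteq> \<Gamma>' \<Longrightarrow> nodes_below \<Gamma> \<subseteq> nodes_below \<Gamma>'"
  unfolding nodes_below_def by blast

lemma countable_nodes_below:
  assumes "is_omega1_type TYPE('c::wellorder)" and "countable (\<Gamma> :: 'c set)"
  shows "countable (nodes_below \<Gamma> :: ('c, 'l) node set)"
proof -
  have "(nodes_below \<Gamma> :: ('c, 'l) node set) \<subseteq> (\<lambda>(g, n). Lo g n) ` ((\<Union>\<gamma>\<in>\<Gamma>. {g. g < \<gamma>}) \<times> UNIV)"
  proof
    fix v :: "('c, 'l) node" assume "v \<in> nodes_below \<Gamma>"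
    then obtain g \<gamma> where g: "lvl v = Ctbl g" "\<gamma> \<in> \<Gamma>" "g < \<gamma>" unfolding nodes_below_def by blast
    then obtain n where "v = Lo g n" by (cases v) auto
    with g show "v \<in> (\<lambda>(g, n). Lo g n) ` ((\<Union>\<gamma>\<in>\<Gamma>. {g. g < \<gamma>}) \<times> UNIV)" by force
  qed
  moreover have "countable ((\<Union>\<gamma>\<in>\<Gamma>. {g. g < \<gamma>}) \<times> (UNIV :: nat set))"
    using assms by (simp add: is_omega1_type_def)
  then have "countable ((\<lambda>(g, n). Lo g n) ` ((\<Union>\<gamma>\<in>\<Gamma>. {g. g < \<gamma>}) \<times> (UNIV :: nat set)))"
    by (rule countable_image)
  ultimately show ?thesis by (rule countable_subset)
qed

context condition
begin

lemma meet_incomparable_same_block: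
  assumes "x \<in> X" "y \<in> X" "x \<noteq> y" "(x, y) \<notin> le" "(y, x) \<notin> le"
    and "blk_of x = Bk z" "blk_of y = Bk z"
  shows "i {x, y} = {}"
proof (cases "lvl x = lvl y")
  case True
  with assms show ?thesis using meet_same_key by simp
next
  case False
  with assms have "(x, y) \<in> le \<or> (y, x) \<in> le"
    using below_own_top by (cases x; cases y) auto
  with assms show ?thesis by simp
qed

lemma meet_in_nodes_below:
  assumes xy: "x \<in> X" "y \<in> X" "x \<noteq> y"
  shows "i {x, y} \<subseteq> {x, y} \<union> nodes_below (level_bounds F {x, y})"
proof
  fix v assume v: "v \<in> i {x, y}"
  show "v \<in> {x, y} \<union> nodes_below (level_bounds F {x, y})"
  proof (cases "(x, y) \<in> le \<or> (y, x) \<in> le")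
    case True
    then have "i {x, y} = {x} \<or> i {y, x} = {y}" using meet_comparable xy(3) by (auto simp: strict_def)
    with v show ?thesis by (auto simp: insert_commute)
  next
    case False
    then have incomparable: "(x, y) \<notin> le" "(y, x) \<notin> le" by simp_all
    with v have below: "(v, x) \<in> le" "(v, y) \<in> le" using meet_lower_bound xy by blast+
    with incomparable have "lev_less (lvl v) (lvl x)" "lev_less (lvl v) (lvl y)"
      using level_less by blast+
    show ?thesis
    proof (cases "\<exists>a. lvl x = Ctbl a \<or> lvl y = Ctbl a")
      case True
      then obtain a g where "lvl x = Ctbl a \<or> lvl y = Ctbl a" "lvl v = Ctbl g" "g < a"
        using \<open>lev_less (lvl v) (lvl x)\<close> \<open>lev_less (lvl v) (lvl y)\<close> lev_less_Ctbl by metis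
      then show ?thesis unfolding nodes_below_def level_bounds_def by force
    next
      case False
      then obtain z z' where tops: "blk_of x = Bk z" "lvl x \<in> {W1, W1s}" "blk_of y = Bk z'" "lvl y \<in> {W1, W1s}"
        using not_Ctbl_imp_block by metis
      have "z \<noteq> z'"
        using meet_incomparable_same_block[OF xy incomparable tops(1)] tops(3) v by blast
      then obtain g where "lvl v = Ctbl g" "g < F {z, z'}"
        using meet_level_bound[OF xy(1,2) incomparable tops(1,3,2,4)] v by blast
      with tops show ?thesis unfolding nodes_below_def level_bounds_def by force
    qed
  qed
qed

end

section \<open>Amalgamation of two conditions\<close>

text \<open>The order of the amalgam: composites of length two already suffice, since every such
  composite passes through a node common to both conditions, on which the two orders agree.\<close>

definition amalg_order :: "'a rel \<Rightarrow> 'a rel \<Rightarrow> 'a rel" where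
  "amalg_order le le' = le \<union> le' \<union> le O le' \<union> le' O le"

lemma amalg_order_commute: "amalg_order le' le = amalg_order le le'"
  unfolding amalg_order_def by blast

text \<open>\<delta> bounds the countable levels of the common nodes, and F exceeds \<delta> on any two top nodes
  each of which belongs to only one of the conditions.\<close>

locale amalgamable = p: condition F X le i + q: condition F X' le' i' for F X le i X' le' i' +
  fixes \<delta> :: "'c::wellorder"
  assumes common_le_iff:
      "x \<in> X \<Longrightarrow> x \<in> X' \<Longrightarrow> y \<in> X \<Longrightarrow> y \<in> X' \<Longrightarrow> (x, y) \<in> le \<longleftrightarrow> (x, y) \<in> le'"
    and common_meet: "x \<in> X \<Longrightarrow> x \<in> X' \<Longrightarrow> y \<in> X \<Longrightarrow> y \<in> X' \<Longrightarrow> x \<noteq> y \<Longrightarrow> i {x, y} = i' {x, y}"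
    and same_key_common:
      "x \<in> X \<Longrightarrow> y \<in> X' \<Longrightarrow> blk_of x = blk_of y \<Longrightarrow> lvl x = lvl y \<Longrightarrow> x \<in> X' \<and> y \<in> X"
    and common_level_le: "r \<in> X \<Longrightarrow> r \<in> X' \<Longrightarrow> lvl r = Ctbl g \<Longrightarrow> g \<le> \<delta>"
    and new_tops_separated:
      "Tp z \<in> X \<Longrightarrow> Tp z \<notin> X' \<Longrightarrow> Tp z' \<in> X' \<Longrightarrow> Tp z' \<notin> X \<Longrightarrow> \<delta> < F {z, z'}"
begin

abbreviation "L \<equiv> amalg_order le le'"

lemma swap: "amalgamable F X' le' i' X le i \<delta>"
proof
  show "(x, y) \<in> le' \<longleftrightarrow> (x, y) \<in> le" if "x \<in> X'" "x \<in> X" "y \<in> X'" "y \<in> X" for x y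
    using common_le_iff[OF that(2,1,4,3)] by (rule sym)
  show "i' {x, y} = i {x, y}" if "x \<in> X'" "x \<in> X" "y \<in> X'" "y \<in> X" "x \<noteq> y" for x y
    using common_meet[OF that(2,1,4,3,5)] by (rule sym)
  show "x \<in> X \<and> y \<in> X'" if "x \<in> X'" "y \<in> X" "blk_of x = blk_of y" "lvl x = lvl y" for x y
    using same_key_common[OF that(2,1) that(3,4)[symmetric]] by blast
  show "g \<le> \<delta>" if "r \<in> X'" "r \<in> X" "lvl r = Ctbl g" for r g
    using common_level_le[OF that(2,1,3)] .
  show "\<delta> < F {z, z'}" if "Tp z \<in> X'" "Tp z \<notin> X" "Tp z' \<in> X" "Tp z' \<notin> X'" for z z'
    using new_tops_separated[OF that(3,4,1,2)] by (simp add: insert_commute)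
qed

lemma le'_imp_le: "(a, b) \<in> le' \<Longrightarrow> a \<in> X \<Longrightarrow> b \<in> X \<Longrightarrow> (a, b) \<in> le"
  using common_le_iff q.le_nodesD by blast

lemma le_imp_le': "(a, b) \<in> le \<Longrightarrow> a \<in> X' \<Longrightarrow> b \<in> X' \<Longrightarrow> (a, b) \<in> le'"
  using common_le_iff p.le_nodesD by blast

lemma le_L: "(x, y) \<in> le \<Longrightarrow> (x, y) \<in> L"
  unfolding amalg_order_def by blast

lemma le'_L: "(x, y) \<in> le' \<Longrightarrow> (x, y) \<in> L"
  unfolding amalg_order_def by blast

lemma L_subset: "L \<subseteq> (X \<union> X') \<times> (X \<union> X')"
  unfolding amalg_order_def using p.le_subset q.le_subset by blast

lemma L_refl: "x \<in> X \<union> X' \<Longrightarrow> (x, x) \<in> L"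
  unfolding amalg_order_def using p.refl_le q.refl_le by blast

lemma L_cases:
  assumes "(x, y) \<in> L"
  obtains "(x, y) \<in> le" | "(x, y) \<in> le'"
    | r where "(x, r) \<in> le" "(r, y) \<in> le'" | r where "(x, r) \<in> le'" "(r, y) \<in> le"
  using assms unfolding amalg_order_def by blast

lemma L_to_left_cases:
  assumes wa: "(w, a) \<in> L" and a: "a \<in> X"
  shows "(w, a) \<in> le \<or> (\<exists>c. c \<in> X \<and> c \<in> X' \<and> (w, c) \<in> le' \<and> (c, a) \<in> le)"
  using wa
proof (cases rule: L_cases)
  case 2
  then show ?thesis using a q.le_nodesD p.refl_le by blast
next
  case (3 r)
  then have "(r, a) \<in> le" using le'_imp_le p.le_nodesD a by blast
  with 3 show ?thesis using p.trans_le by blast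
next
  case (4 r)
  then show ?thesis using p.le_nodesD q.le_nodesD by blast
qed simp

lemma L_from_left_cases:
  assumes wa: "(w, a) \<in> L" and w: "w \<in> X"
  shows "(w, a) \<in> le \<or> (\<exists>c. c \<in> X \<and> c \<in> X' \<and> (w, c) \<in> le \<and> (c, a) \<in> le')"
  using wa
proof (cases rule: L_cases)
  case 2
  then show ?thesis using w q.le_nodesD p.refl_le by blast
next
  case (3 r)
  then show ?thesis using p.le_nodesD q.le_nodesD by blast
next
  case (4 r)
  then have "(w, r) \<in> le" using le'_imp_le p.le_nodesD w by blast
  with 4 show ?thesis using p.trans_le by blast
qed simp

lemma L_restrict:
  assumes "x \<in> X" "y \<in> X"
  shows "(x, y) \<in> L \<longleftrightarrow> (x, y) \<in> le"
proof
  assume "(x, y) \<in> L"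
  with assms show "(x, y) \<in> le"
    using L_to_left_cases le'_imp_le p.trans_le by blast
qed (rule le_L)

lemma L_trans_left:
  assumes xy: "(x, y) \<in> L" and yz: "(y, z) \<in> L" and y: "y \<in> X"
  shows "(x, z) \<in> L"
  using L_to_left_cases[OF xy y] L_from_left_cases[OF yz y]
proof (elim disjE exE conjE)
  fix c d assume "c \<in> X" "c \<in> X'" "(x, c) \<in> le'" "(c, y) \<in> le"
    "d \<in> X" "d \<in> X'" "(y, d) \<in> le" "(d, z) \<in> le'"
  then have "(x, z) \<in> le'" using p.trans_le le_imp_le' q.trans_le by meson
  then show ?thesis by (rule le'_L)
qed (use p.trans_le in \<open>auto simp: amalg_order_def\<close>)

lemma L_trans: "(x, y) \<in> L \<Longrightarrow> (y, z) \<in> L \<Longrightarrow> (x, z) \<in> L"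
proof -
  assume xy: "(x, y) \<in> L" and yz: "(y, z) \<in> L"
  interpret s: amalgamable F X' le' i' X le i \<delta> by (rule swap)
  have "y \<in> X \<or> y \<in> X'" using xy L_subset by blast
  then show ?thesis
    using L_trans_left[OF xy yz] s.L_trans_left xy yz amalg_order_commute by metis
qed

lemma L_level: "(x, y) \<in> L \<Longrightarrow> x = y \<or> lev_less (lvl x) (lvl y)"
proof -
  have step: "a = b \<or> lev_less (lvl a) (lvl b)" if "(a, b) \<in> le \<union> le'" for a b
    using that p.level_less q.level_less by blast
  assume "(x, y) \<in> L"
  then show ?thesis
  proof (cases rule: L_cases)
    case (3 r)
    then show ?thesis using step[of x r] step[of r y] lev_less_trans by blast
  next
    case (4 r)
    then show ?thesis using step[of x r] step[of r y] lev_less_trans by blast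
  qed (use step in blast)+
qed

lemma L_antisym: "(x, y) \<in> L \<Longrightarrow> (y, x) \<in> L \<Longrightarrow> x = y"
  using L_level lev_less_trans lev_less_irrefl by blast

lemma L_partial_order: "partial_order_on (X \<union> X') L"
  unfolding partial_order_on_def preorder_on_def refl_on_def trans_def antisym_def
  using L_subset L_refl L_trans L_antisym by blast

text \<open>When both paths from w pass through the other condition, the meet there of the two
  common nodes provides the lower bound.\<close>

lemma common_lower_bound:
  assumes ab: "a \<in> X" "b \<in> X" and w: "(w, a) \<in> L" "(w, b) \<in> L"
  shows "\<exists>c\<in>X. (w, c) \<in> L \<and> (c, a) \<in> le \<and> (c, b) \<in> le"
  using L_to_left_cases[OF w(1) ab(1)] L_to_left_cases[OF w(2) ab(2)]
proof (elim disjE exE conjE)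
  assume "(w, a) \<in> le" "(w, b) \<in> le"
  then show ?thesis using p.le_nodesD p.refl_le L_refl by blast
next
  fix c assume h: "(w, a) \<in> le" "c \<in> X" "c \<in> X'" "(w, c) \<in> le'" "(c, b) \<in> le"
  then have "(w, c) \<in> le" using le'_imp_le p.le_nodesD by blast
  with h show ?thesis using p.le_nodesD L_refl p.trans_le by blast
next
  fix c assume h: "(w, b) \<in> le" "c \<in> X" "c \<in> X'" "(w, c) \<in> le'" "(c, a) \<in> le"
  then have "(w, c) \<in> le" using le'_imp_le p.le_nodesD by blast
  with h show ?thesis using p.le_nodesD L_refl p.trans_le by blast
next
  fix c d assume h: "c \<in> X" "c \<in> X'" "(w, c) \<in> le'" "(c, a) \<in> le"
    "d \<in> X" "d \<in> X'" "(w, d) \<in> le'" "(d, b) \<in> le"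
  show ?thesis
  proof (cases "(c, d) \<in> le' \<or> (d, c) \<in> le'")
    case True
    then have "(c, d) \<in> le \<or> (d, c) \<in> le" using le'_imp_le h by blast
    with h show ?thesis using p.trans_le le'_L by blast
  next
    case False
    then have cd: "(c, d) \<notin> le'" "(d, c) \<notin> le'" by simp_all
    have "w \<in> X'" using h q.le_nodesD by blast
    with h cd obtain v where v: "v \<in> i' {c, d}" "(w, v) \<in> le'"
      using q.lower_bounds_meet[OF h(2) h(6) cd] by blast
    have "c \<noteq> d" using cd q.refl_le h by blast
    with h have "i' {c, d} = i {c, d}" using common_meet by simp
    moreover have "(c, d) \<notin> le" "(d, c) \<notin> le" using cd le_imp_le' h by blast+
    ultimately have "(v, c) \<in> le" "(v, d) \<in> le" using p.meet_lower_bound h v(1) by blast+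
    with h v(2) show ?thesis using p.le_nodesD p.trans_le le'_L by blast
  qed
qed

lemma L_below_Ctbl: "(v, c) \<in> L \<Longrightarrow> lvl c = Ctbl g \<Longrightarrow> \<exists>g'. lvl v = Ctbl g' \<and> g' \<le> g"
  using L_level lev_less_Ctbl by (metis order_less_imp_le order_refl)

lemma L_Md_le_Tp:
  assumes Md: "Md z n \<in> X" and le: "(Md z n, Tp \<xi>) \<in> L"
  shows "\<xi> = z"
  using L_from_left_cases[OF le Md]
proof (elim disjE exE conjE)
  assume "(Md z n, Tp \<xi>) \<in> le"
  then show ?thesis using p.Md_le_cases by blast
next
  fix c assume "(Md z n, c) \<in> le" "(c, Tp \<xi>) \<in> le'"
  moreover from this(1) have "c = Md z n \<or> c = Tp z" by (rule p.Md_le_cases)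
  ultimately show ?thesis using q.Md_le_cases q.Tp_le by fastforce
qed

lemma common_below_outside_is_Ctbl:
  assumes c: "c \<in> X" "(c, y) \<in> le'" and y: "y \<notin> X"
  shows "\<exists>g. lvl c = Ctbl g"
proof (cases c)
  case (Md w n)
  then have "y = Tp w" using q.Md_le_cases c y by blast
  moreover have "Tp w \<in> X" using p.top_in_nodes c Md by simp
  ultimately show ?thesis using y by simp
next
  case (Tp w)
  then show ?thesis using q.Tp_le c y by blast
qed simp

lemma L_predecessor_level:
  assumes t: "t \<in> X" and succ: "lev_succ a (lvl t)" and st: "(s, t) \<in> L" "s \<noteq> t"
  shows "\<exists>v\<in>X \<union> X'. lvl v = a \<and> (s, v) \<in> L \<and> (v, t) \<in> L \<and> v \<noteq> t"
  using L_to_left_cases[OF st(1) t]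
proof (elim disjE exE conjE)
  assume "(s, t) \<in> le"
  then obtain v where "v \<in> X" "lvl v = a" "(s, v) \<in> le" "strict le v t"
    using p.predecessor_level[OF t succ] st(2) by (auto simp: strict_def)
  then show ?thesis unfolding strict_def using le_L by blast
next
  fix c assume c: "c \<in> X" "c \<in> X'" "(s, c) \<in> le'" "(c, t) \<in> le"
  show ?thesis
  proof (cases "c = t")
    case True
    then obtain v where "v \<in> X'" "lvl v = a" "(s, v) \<in> le'" "strict le' v t"
      using q.predecessor_level[OF _ succ, of s] c st(2) by (auto simp: strict_def)
    then show ?thesis unfolding strict_def using le'_L by blast
  next
    case False
    then obtain v where v: "v \<in> X" "lvl v = a" "(c, v) \<in> le" "strict le v t"
      using p.predecessor_level[OF t succ, of c] c by (auto simp: strict_def)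
    then have "(s, v) \<in> L" using c unfolding amalg_order_def by blast
    with v show ?thesis unfolding strict_def using le_L by blast
  qed
qed

end

definition pair_meet :: "'a set \<Rightarrow> 'a rel \<Rightarrow> 'a set \<Rightarrow> 'a set" where
  "pair_meet Z L e = (if \<exists>a\<in>e. \<forall>b\<in>e. (a, b) \<in> L then {a\<in>e. \<forall>b\<in>e. (a, b) \<in> L}
     else {w\<in>Z. \<forall>b\<in>e. (w, b) \<in> L})"

definition amalg_meet ::
    "'a set \<Rightarrow> 'a rel \<Rightarrow> ('a set \<Rightarrow> 'a set) \<Rightarrow> 'a set \<Rightarrow> 'a rel \<Rightarrow> ('a set \<Rightarrow> 'a set) \<Rightarrow> 'a set \<Rightarrow> 'a set"
  where
  "amalg_meet X le i X' le' i' e =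
     (if e \<subseteq> X then i e else if e \<subseteq> X' then i' e
      else if e \<subseteq> X \<union> X' \<and> card e = 2 then pair_meet (X \<union> X') (amalg_order le le') e else {})"

lemma pair_meet_subset: "pair_meet Z L e \<subseteq> e \<union> Z"
  unfolding pair_meet_def by auto

lemma pair_meet_incomparable:
  "(x, y) \<notin> L \<Longrightarrow> (y, x) \<notin> L \<Longrightarrow> pair_meet Z L {x, y} = {w\<in>Z. (w, x) \<in> L \<and> (w, y) \<in> L}"
  unfolding pair_meet_def by auto

context amalgamable
begin

abbreviation "I \<equiv> amalg_meet X le i X' le' i'"

lemma I_swap: "amalg_meet X' le' i' X le i = I"
proof
  fix e
  show "amalg_meet X' le' i' X le i e = I e"
  proof (cases "e \<subseteq> X \<and> e \<subseteq> X'")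
    case common: True
    show ?thesis
    proof (cases "\<exists>x y. x \<noteq> y \<and> e = {x, y}")
      case True
      then obtain x y where "x \<noteq> y" "e = {x, y}" by blast
      with common have "i e = i' e" using common_meet[of x y] by simp
      with common show ?thesis by (simp add: amalg_meet_def)
    next
      case False
      then have n: "\<not> (\<exists>x\<in>X. \<exists>y\<in>X. x \<noteq> y \<and> e = {x, y})"
        and n': "\<not> (\<exists>x\<in>X'. \<exists>y\<in>X'. x \<noteq> y \<and> e = {x, y})" by blast+
      have "i e = {}" using n by (rule p.meet_non_pair)
      moreover have "i' e = {}" using n' by (rule q.meet_non_pair)
      ultimately show ?thesis using common by (simp add: amalg_meet_def)
    qed
  next
    case False
    have "X' \<union> X = X \<union> X'" by (rule Un_commute)
    with False show ?thesis by (simp add: amalg_meet_def amalg_order_commute)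
  qed
qed

lemma I_left: "x \<in> X \<Longrightarrow> y \<in> X \<Longrightarrow> I {x, y} = i {x, y}"
  by (simp add: amalg_meet_def)

lemma I_mixed:
  assumes "x \<in> X" "x \<notin> X'" "y \<in> X'" "y \<notin> X"
  shows "I {x, y} = pair_meet (X \<union> X') L {x, y}"
proof -
  from assms have "x \<noteq> y" by blast
  then have "card {x, y} = 2" by simp
  with assms show ?thesis by (simp add: amalg_meet_def)
qed

lemma pair_meet_comparable: "(x, y) \<in> L \<Longrightarrow> x \<noteq> y \<Longrightarrow> pair_meet Z L {x, y} = {x}"
proof -
  assume xy: "(x, y) \<in> L" "x \<noteq> y"
  then have "(y, x) \<notin> L" "(x, x) \<in> L" using L_antisym L_subset L_refl by blast+
  with xy show ?thesis unfolding pair_meet_def by auto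
qed

lemma I_left_lower_bounds:
  assumes xy: "x \<in> X" "y \<in> X" "(x, y) \<notin> L" "(y, x) \<notin> L"
  shows "((u, x) \<in> L \<and> (u, y) \<in> L) \<longleftrightarrow> (\<exists>v\<in>I {x, y}. (u, v) \<in> L)"
proof -
  have I: "I {x, y} = i {x, y}" using I_left xy by blast
  have incomparable: "(x, y) \<notin> le" "(y, x) \<notin> le" using xy le_L by blast+
  show ?thesis
  proof
    assume "(u, x) \<in> L \<and> (u, y) \<in> L"
    then obtain c where c: "c \<in> X" "(u, c) \<in> L" "(c, x) \<in> le" "(c, y) \<in> le"
      using common_lower_bound xy by blast
    then obtain v where "v \<in> i {x, y}" "(c, v) \<in> le"
      using p.lower_bounds_meet[OF xy(1,2) incomparable c(1)] by blast
    then show "\<exists>v\<in>I {x, y}. (u, v) \<in> L" using I c(2) le_L L_trans by blast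
  next
    assume "\<exists>v\<in>I {x, y}. (u, v) \<in> L"
    then obtain v where v: "v \<in> i {x, y}" "(u, v) \<in> L" using I by blast
    then have "(v, x) \<in> le \<and> (v, y) \<in> le" using p.meet_lower_bound[OF xy(1,2) incomparable] by blast
    then show "(u, x) \<in> L \<and> (u, y) \<in> L" using v le_L L_trans by blast
  qed
qed

lemma I_mixed_lower_bounds:
  assumes xy: "x \<in> X" "x \<notin> X'" "y \<in> X'" "y \<notin> X" "(x, y) \<notin> L" "(y, x) \<notin> L"
    and u: "u \<in> X \<union> X'"
  shows "((u, x) \<in> L \<and> (u, y) \<in> L) \<longleftrightarrow> (\<exists>v\<in>I {x, y}. (u, v) \<in> L)"
proof -
  have "I {x, y} = {w\<in>X \<union> X'. (w, x) \<in> L \<and> (w, y) \<in> L}"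
    using I_mixed[OF xy(1-4)] pair_meet_incomparable[OF xy(5,6)] by simp
  with u show ?thesis using L_refl L_trans by blast
qed

lemma L_lower_bound_left_tops:
  assumes Tz: "Tp z \<in> X" "Tp z' \<in> X" "z \<noteq> z'" and v: "(v, Tp z) \<in> L" "(v, Tp z') \<in> L"
  shows "\<exists>g. lvl v = Ctbl g \<and> g < F {z, z'}"
proof -
  have "Tp z \<noteq> Tp z'" using Tz(3) by simp
  then have incomparable: "(Tp z, Tp z') \<notin> le" "(Tp z', Tp z) \<notin> le" using p.Tp_le by metis+
  obtain c where c: "c \<in> X" "(v, c) \<in> L" "(c, Tp z) \<in> le" "(c, Tp z') \<in> le"
    using common_lower_bound[OF Tz(1,2) v] by blast
  obtain u where u: "u \<in> i {Tp z, Tp z'}" "(c, u) \<in> le"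
    using p.lower_bounds_meet[OF Tz(1,2) incomparable c(1)] c by blast
  obtain g where g: "lvl u = Ctbl g" "g < F {z, z'}"
    using p.meet_level_bound[OF Tz(1,2) incomparable, of z z' u] u(1) Tz(3) by auto
  have "(v, u) \<in> L" using c(2) u(2) le_L L_trans by blast
  with g show ?thesis using L_below_Ctbl by fastforce
qed

lemma common_node_below_mixed_pair:
  assumes xy: "x \<in> X" "x \<notin> X'" "y \<in> X'" "y \<notin> X" and v: "(v, x) \<in> L" "(v, y) \<in> L"
  obtains c where "c \<in> X" "c \<in> X'" "(v, c) \<in> L" "\<exists>g. lvl c = Ctbl g"
proof (cases "v \<in> X")
  case True
  from L_from_left_cases[OF v(2) True] obtain c
    where "c \<in> X" "c \<in> X'" "(v, c) \<in> le" "(c, y) \<in> le'"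
    using xy(4) p.le_nodesD by blast
  then show ?thesis using that common_below_outside_is_Ctbl xy(4) le_L by blast
next
  case False
  interpret s: amalgamable F X' le' i' X le i \<delta> by (rule swap)
  have "v \<in> X'" using False v L_subset by blast
  moreover have "(v, x) \<in> s.L" using v(1) amalg_order_commute[of le' le] by simp
  ultimately obtain c where "c \<in> X'" "c \<in> X" "(v, c) \<in> le'" "(c, x) \<in> le"
    using s.L_from_left_cases xy(2) q.le_nodesD by blast
  then show ?thesis using that s.common_below_outside_is_Ctbl xy(2) le'_L by blast
qed

text \<open>Strong unboundedness enters here: if neither top node belongs to both conditions, a common
  lower bound lies below a common node, whose level is at most \<delta> < F {z, z'}.\<close>

lemma mixed_lower_bound_level:
  assumes xy: "x \<in> X" "x \<notin> X'" "y \<in> X'" "y \<notin> X"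
    and blocks: "blk_of x = Bk z" "blk_of y = Bk z'" "z \<noteq> z'"
    and v: "(v, x) \<in> L" "(v, y) \<in> L"
  shows "\<exists>g. lvl v = Ctbl g \<and> g < F {z, z'}"
proof -
  interpret s: amalgamable F X' le' i' X le i \<delta> by (rule swap)
  have tops: "(x, Tp z) \<in> le" "(y, Tp z') \<in> le'"
    using p.below_own_top[OF xy(1) blocks(1)] q.below_own_top[OF xy(3) blocks(2)] .
  then have Tz: "Tp z \<in> X" and Tz': "Tp z' \<in> X'" using p.le_nodesD q.le_nodesD by blast+
  have vT: "(v, Tp z) \<in> L" "(v, Tp z') \<in> L" using v tops le_L le'_L L_trans by blast+
  consider "Tp z' \<in> X" | "Tp z \<in> X'" | "Tp z \<notin> X'" "Tp z' \<notin> X" by blast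
  then show ?thesis
  proof cases
    case 1
    then show ?thesis using L_lower_bound_left_tops Tz blocks(3) vT by blast
  next
    case 2
    then show ?thesis
      using s.L_lower_bound_left_tops[OF 2 Tz' blocks(3)] vT amalg_order_commute[of le' le] by simp
  next
    case 3
    have separated: "\<delta> < F {z, z'}" using new_tops_separated[OF Tz 3(1) Tz' 3(2)] .
    obtain c g where c: "c \<in> X" "c \<in> X'" "(v, c) \<in> L" "lvl c = Ctbl g"
      using common_node_below_mixed_pair[OF xy v] by blast
    then have "g \<le> \<delta>" using common_level_le by blast
    then show ?thesis
      using L_below_Ctbl[OF c(3,4)] separated by (meson order_le_less_trans)
  qed
qed

end

context amalgamable
begin

lemmas L_Md_le_Tp' = amalgamable.L_Md_le_Tp[OF swap, unfolded amalg_order_commute[of le' le]]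
lemmas L_restrict' = amalgamable.L_restrict[OF swap, unfolded amalg_order_commute[of le' le]]
lemmas L_predecessor_level' =
  amalgamable.L_predecessor_level[OF swap, unfolded amalg_order_commute[of le' le] Un_commute[of X' X]]
lemmas I_left' = amalgamable.I_left[OF swap, unfolded I_swap]
lemmas I_mixed' = amalgamable.I_mixed[OF swap, unfolded I_swap amalg_order_commute[of le' le] Un_commute[of X' X]]
lemmas I_left_lower_bounds' =
  amalgamable.I_left_lower_bounds[OF swap, unfolded I_swap amalg_order_commute[of le' le]]
lemmas I_mixed_lower_bounds' =
  amalgamable.I_mixed_lower_bounds[OF swap, unfolded I_swap amalg_order_commute[of le' le] Un_commute[of X' X]]
lemmas mixed_lower_bound_level' =
  amalgamable.mixed_lower_bound_level[OF swap, unfolded amalg_order_commute[of le' le]]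

lemma amalgam_pair_cases:
  assumes "x \<in> X \<union> X'" "y \<in> X \<union> X'"
  obtains (left) "x \<in> X" "y \<in> X" | (right) "x \<in> X'" "y \<in> X'"
    | (mixed) "x \<in> X" "x \<notin> X'" "y \<in> X'" "y \<notin> X"
    | (mixed') "x \<in> X'" "x \<notin> X" "y \<in> X" "y \<notin> X'"
  using assms by blast

lemma amalgam_Md_top:
  "\<forall>z n. Md z n \<in> X \<union> X' \<longrightarrow> strict L (Md z n) (Tp z) \<and>
     (\<forall>\<xi>. \<xi> \<noteq> z \<and> Tp \<xi> \<in> X \<union> X' \<longrightarrow> \<not> strict L (Md z n) (Tp \<xi>))"
proof (intro allI impI conjI)
  fix z n \<xi> assume Md: "Md z n \<in> X \<union> X'"
  then show "strict L (Md z n) (Tp z)"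
    using p.Md_below_top q.Md_below_top le_L le'_L by (auto simp: strict_def)
  assume "\<xi> \<noteq> z \<and> Tp \<xi> \<in> X \<union> X'"
  with Md show "\<not> strict L (Md z n) (Tp \<xi>)"
    using L_Md_le_Tp L_Md_le_Tp' by (auto simp: strict_def)
qed

lemma amalgam_meet_same_key:
  "\<forall>s\<in>X \<union> X'. \<forall>t\<in>X \<union> X'. s \<noteq> t \<and> blk_of s = blk_of t \<and> lvl s = lvl t \<longrightarrow> I {s, t} = {}"
proof (intro ballI impI)
  fix x y assume xy: "x \<in> X \<union> X'" "y \<in> X \<union> X'"
    and key: "x \<noteq> y \<and> blk_of x = blk_of y \<and> lvl x = lvl y"
  from xy show "I {x, y} = {}"
  proof (cases rule: amalgam_pair_cases)
    case left
    then show ?thesis using I_left p.meet_same_key key by simp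
  next
    case right
    then show ?thesis using I_left' q.meet_same_key key by simp
  next
    case mixed
    then show ?thesis using same_key_common key by blast
  next
    case mixed'
    then show ?thesis using same_key_common[of y x] key by simp
  qed
qed

lemma amalgam_predecessor_level:
  "\<forall>t\<in>X \<union> X'. \<forall>a s. lev_succ a (lvl t) \<and> strict L s t \<longrightarrow>
     (\<exists>v\<in>X \<union> X'. lvl v = a \<and> (s, v) \<in> L \<and> strict L v t)"
proof (intro ballI allI impI)
  fix t a s assume t: "t \<in> X \<union> X'" and st: "lev_succ a (lvl t) \<and> strict L s t"
  then consider "t \<in> X" | "t \<in> X'" by blast
  then show "\<exists>v\<in>X \<union> X'. lvl v = a \<and> (s, v) \<in> L \<and> strict L v t"
  proof cases
    case 1
    then show ?thesis using L_predecessor_level st by (auto simp: strict_def)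
  next
    case 2
    then show ?thesis using L_predecessor_level' st by (auto simp: strict_def)
  qed
qed

lemma amalgam_meet_subset:
  "\<forall>e. (\<exists>x\<in>X \<union> X'. \<exists>y\<in>X \<union> X'. x \<noteq> y \<and> e = {x, y}) \<longrightarrow> I e \<subseteq> X \<union> X' \<and> finite (I e)"
proof (intro allI impI)
  fix e assume "\<exists>x\<in>X \<union> X'. \<exists>y\<in>X \<union> X'. x \<noteq> y \<and> e = {x, y}"
  then obtain x y where xy: "x \<in> X \<union> X'" "y \<in> X \<union> X'" "x \<noteq> y" "e = {x, y}" by blast
  have "I e \<subseteq> X \<union> X'"
  proof (cases "e \<subseteq> X")
    case True
    then show ?thesis using p.meet_subset_nodes xy by (simp add: amalg_meet_def) blast
  next
    case notX: False
    show ?thesis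
    proof (cases "e \<subseteq> X'")
      case True
      then show ?thesis using q.meet_subset_nodes xy notX by (simp add: amalg_meet_def) blast
    next
      case False
      have "e \<subseteq> X \<union> X'" using xy by blast
      then show ?thesis using notX False pair_meet_subset[of "X \<union> X'" L e] by (auto simp: amalg_meet_def)
    qed
  qed
  moreover have "finite (X \<union> X')" using p.finite_nodes q.finite_nodes by simp
  ultimately show "I e \<subseteq> X \<union> X' \<and> finite (I e)" using finite_subset by blast
qed

lemma amalgam_meet_non_pair:
  "\<forall>e. \<not> (\<exists>x\<in>X \<union> X'. \<exists>y\<in>X \<union> X'. x \<noteq> y \<and> e = {x, y}) \<longrightarrow> I e = {}"
proof (intro allI impI)
  fix e assume no_pair: "\<not> (\<exists>x\<in>X \<union> X'. \<exists>y\<in>X \<union> X'. x \<noteq> y \<and> e = {x, y})"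
  then have n: "\<not> (\<exists>x\<in>X. \<exists>y\<in>X. x \<noteq> y \<and> e = {x, y})"
    and n': "\<not> (\<exists>x\<in>X'. \<exists>y\<in>X'. x \<noteq> y \<and> e = {x, y})" by blast+
  have "i e = {}" using n by (rule p.meet_non_pair)
  moreover have "i' e = {}" using n' by (rule q.meet_non_pair)
  moreover have "\<not> (e \<subseteq> X \<union> X' \<and> card e = 2)"
    using no_pair by (auto simp: card_2_iff)
  ultimately show "I e = {}" unfolding amalg_meet_def by auto
qed

lemma amalgam_meet_comparable: "\<forall>x y. strict L x y \<longrightarrow> I {x, y} = {x}"
proof (intro allI impI)
  fix x y assume "strict L x y"
  then have xy: "(x, y) \<in> L" "x \<noteq> y" by (auto simp: strict_def)
  then have "x \<in> X \<union> X'" "y \<in> X \<union> X'" using L_subset by blast+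
  then show "I {x, y} = {x}"
  proof (cases rule: amalgam_pair_cases)
    case left
    then have "strict le x y" using xy L_restrict by (simp add: strict_def)
    then show ?thesis using I_left p.meet_comparable left by simp
  next
    case right
    then have "strict le' x y" using xy L_restrict' by (simp add: strict_def)
    then show ?thesis using I_left' q.meet_comparable right by simp
  next
    case mixed
    then show ?thesis using I_mixed pair_meet_comparable xy by simp
  next
    case mixed'
    then show ?thesis using I_mixed' pair_meet_comparable xy by simp
  qed
qed

lemma amalgam_lower_bounds_meet:
  assumes xy: "x \<in> X \<union> X'" "y \<in> X \<union> X'" "(x, y) \<notin> L" "(y, x) \<notin> L" and u: "u \<in> X \<union> X'"
  shows "((u, x) \<in> L \<and> (u, y) \<in> L) \<longleftrightarrow> (\<exists>v\<in>I {x, y}. (u, v) \<in> L)"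
  using xy(1,2)
proof (cases rule: amalgam_pair_cases)
  case left
  then show ?thesis using I_left_lower_bounds xy(3,4) by simp
next
  case right
  then show ?thesis using I_left_lower_bounds' xy(3,4) by simp
next
  case mixed
  then show ?thesis using I_mixed_lower_bounds xy(3,4) u by simp
next
  case mixed'
  then show ?thesis using I_mixed_lower_bounds' xy(3,4) u by simp
qed

lemma amalgam_meet_level_bound:
  assumes xy: "x \<in> X \<union> X'" "y \<in> X \<union> X'" "(x, y) \<notin> L" "(y, x) \<notin> L"
    and tops: "blk_of x = Bk z" "blk_of y = Bk z'" "lvl x \<in> {W1, W1s}" "lvl y \<in> {W1, W1s}" "z \<noteq> z'"
    and v: "v \<in> I {x, y}"
  shows "\<exists>\<gamma>. lvl v = Ctbl \<gamma> \<and> \<gamma> < F {z, z'}"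
  using xy(1,2)
proof (cases rule: amalgam_pair_cases)
  case left
  moreover have "(x, y) \<notin> le" "(y, x) \<notin> le" using xy le_L by blast+
  ultimately show ?thesis using p.meet_level_bound tops v I_left by simp
next
  case right
  moreover have "(x, y) \<notin> le'" "(y, x) \<notin> le'" using xy le'_L by blast+
  ultimately show ?thesis using q.meet_level_bound tops v I_left' by simp
next
  case mixed
  then have "(v, x) \<in> L" "(v, y) \<in> L"
    using v I_mixed pair_meet_incomparable[OF xy(3,4)] by simp_all
  with mixed show ?thesis using mixed_lower_bound_level tops by blast
next
  case mixed'
  then have "(v, x) \<in> L" "(v, y) \<in> L"
    using v I_mixed' pair_meet_incomparable[OF xy(3,4)] by simp_all
  with mixed' show ?thesis using mixed_lower_bound_level' tops by blast
qed

theorem amalgam_Pcond: "Pcond F (X \<union> X', L, I)"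
  unfolding Pcond_def prod.case
proof (intro conjI)
  show "finite (X \<union> X')" using p.finite_nodes q.finite_nodes by simp
  show "\<forall>x y. strict L x y \<longrightarrow> lev_less (lvl x) (lvl y)"
    using L_level by (auto simp: strict_def)
  show "\<forall>z. (\<exists>x\<in>X \<union> X'. blk_of x = Bk z) \<longrightarrow> Tp z \<in> X \<union> X'"
    using p.top_in_nodes q.top_in_nodes by blast
  show "\<forall>x\<in>X \<union> X'. \<forall>y\<in>X \<union> X'. (x, y) \<notin> L \<and> (y, x) \<notin> L \<longrightarrow>
      (\<forall>u\<in>X \<union> X'. ((u, x) \<in> L \<and> (u, y) \<in> L) \<longleftrightarrow> (\<exists>v\<in>I {x, y}. (u, v) \<in> L)) \<and>
      (\<forall>z z'. blk_of x = Bk z \<and> blk_of y = Bk z' \<and> lvl x \<in> {W1, W1s} \<and> lvl y \<in> {W1, W1s} \<and>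
          z \<noteq> z' \<longrightarrow> (\<forall>v\<in>I {x, y}. \<exists>\<gamma>. lvl v = Ctbl \<gamma> \<and> \<gamma> < F {z, z'}))"
    using amalgam_lower_bounds_meet amalgam_meet_level_bound by blast
qed (fact L_subset L_partial_order amalgam_Md_top amalgam_meet_same_key amalgam_predecessor_level
  amalgam_meet_subset amalgam_meet_non_pair amalgam_meet_comparable)+

theorem amalgam_compatible: "compatible F (X, le, i) (X', le', i')"
  unfolding compatible_def
proof (intro bexI conjI)
  show "(X \<union> X', L, I) \<in> Pset F" using amalgam_Pcond by (simp add: Pset_def)
  show "Pleq (X \<union> X', L, I) (X, le, i)"
    unfolding Pleq_def prod.case using L_restrict p.le_subset I_left by blast
  show "Pleq (X \<union> X', L, I) (X', le', i')"
    unfolding Pleq_def prod.case using L_restrict' q.le_subset I_left' by blast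
qed

end

section \<open>Thinning out an uncountable antichain\<close>

text \<open>Only countably many traces on a finite set R occur, since meets of nodes of R lie in R or on
  countable levels below the finite set level_bounds F R.\<close>

definition trace :: "('c, 'l) node set \<Rightarrow> ('c, 'l) cond \<Rightarrow>
    ('c, 'l) node rel \<times> (('c, 'l) node set \<times> ('c, 'l) node set) set" where
  "trace R p = (case p of (X, le, i) \<Rightarrow> (le \<inter> R \<times> R, (\<lambda>e. (e, i e)) ` Pow R))"

lemma trace_eqD:
  assumes "trace R (X, le, i) = trace R (X', le', i')"
  shows "le \<inter> R \<times> R = le' \<inter> R \<times> R" and "e \<subseteq> R \<Longrightarrow> i e = i' e"
proof -
  from assms show "le \<inter> R \<times> R = le' \<inter> R \<times> R" by (simp add: trace_def)
  assume "e \<subseteq> R"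
  then have "(e, i e) \<in> (\<lambda>e. (e, i e)) ` Pow R" by blast
  also have "(\<lambda>e. (e, i e)) ` Pow R = (\<lambda>e. (e, i' e)) ` Pow R"
    using assms by (simp add: trace_def)
  finally obtain e' where "(e, i e) = (e', i' e')" by (rule imageE)
  then show "i e = i' e" by auto
qed

lemma (in condition) meet_on_root:
  assumes R: "R \<subseteq> X" and e: "e \<subseteq> R"
  shows "finite (i e) \<and> i e \<subseteq> R \<union> nodes_below (level_bounds F R)"
proof (cases "\<exists>x\<in>X. \<exists>y\<in>X. x \<noteq> y \<and> e = {x, y}")
  case True
  then obtain x y where xy: "x \<in> X" "y \<in> X" "x \<noteq> y" and e_eq: "e = {x, y}" by blast
  have "i e \<subseteq> {x, y} \<union> nodes_below (level_bounds F {x, y})"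
    using meet_in_nodes_below[OF xy] e_eq by simp
  also have "\<dots> \<subseteq> R \<union> nodes_below (level_bounds F R)"
    using e e_eq nodes_below_mono[OF level_bounds_mono[of "{x, y}" R]] by blast
  finally show ?thesis using meet_subset_nodes[OF xy] e_eq by simp
next
  case False
  then show ?thesis using meet_non_pair by simp
qed

lemma countable_traces:
  fixes F :: "'l set \<Rightarrow> 'c::wellorder"
  assumes om: "is_omega1_type TYPE('c)" and R: "finite R"
  shows "countable (trace R ` {p \<in> Pset F. R \<subseteq> fst p})"
proof -
  define S where "S = R \<union> nodes_below (level_bounds F R)"
  have "countable (nodes_below (level_bounds F R) :: ('c, 'l) node set)"
    using countable_nodes_below[OF om] finite_level_bounds[OF R] countable_finite by blast
  then have "countable S" unfolding S_def using R countable_finite by blast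
  then have "countable {T. finite T \<and> T \<subseteq> S}" by (rule countable_Collect_finite_subset)
  then have "countable (Pow R \<times> {T. finite T \<and> T \<subseteq> S})"
    using R by (simp add: countable_finite)
  then have "countable {H. finite H \<and> H \<subseteq> Pow R \<times> {T. finite T \<and> T \<subseteq> S}}"
    by (rule countable_Collect_finite_subset)
  then have "countable (Pow (R \<times> R) \<times> {H. finite H \<and> H \<subseteq> Pow R \<times> {T. finite T \<and> T \<subseteq> S}})"
    using R by (simp add: countable_finite)
  moreover have "trace R ` {p \<in> Pset F. R \<subseteq> fst p}
      \<subseteq> Pow (R \<times> R) \<times> {H. finite H \<and> H \<subseteq> Pow R \<times> {T. finite T \<and> T \<subseteq> S}}"
  proof (rule image_subsetI)
    fix p assume p: "p \<in> {p \<in> Pset F. R \<subseteq> fst p}"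
    obtain X le i where p_eq: "p = (X, le, i)" by (cases p)
    with p interpret condition F X le i by (simp add: condition_def Pset_def)
    from p p_eq have "R \<subseteq> X" by simp
    then have "(e, i e) \<in> Pow R \<times> {T. finite T \<and> T \<subseteq> S}" if "e \<subseteq> R" for e
      using meet_on_root that unfolding S_def by blast
    then show "trace R p \<in> Pow (R \<times> R) \<times> {H. finite H \<and> H \<subseteq> Pow R \<times> {T. finite T \<and> T \<subseteq> S}}"
      using R p_eq by (auto simp: trace_def)
  qed
  ultimately show ?thesis by (rule countable_subset[rotated])
qed

lemma Pset_finite_nodes: "p \<in> Pset F \<Longrightarrow> finite (fst p)"
  by (cases p) (simp add: Pset_def Pcond_def)

text \<open>A \<Delta>-system argument on the sets of keys: the nodes of two different conditions that
  share a key all lie in a fixed finite root.\<close>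

lemma uncountable_common_root:
  fixes A :: "('c::wellorder, 'l) cond set"
  assumes A: "uncountable A" "A \<subseteq> Pset F"
  obtains A' R where "A' \<subseteq> A" "uncountable A'" "finite R" "\<And>p. p \<in> A' \<Longrightarrow> R \<subseteq> fst p"
    "\<And>p q x y. p \<in> A' \<Longrightarrow> q \<in> A' \<Longrightarrow> p \<noteq> q \<Longrightarrow> x \<in> fst p \<Longrightarrow> y \<in> fst q \<Longrightarrow> key x = key y \<Longrightarrow> x \<in> R"
proof -
  have "finite (key ` fst p)" if "p \<in> A" for p using A(2) that Pset_finite_nodes by blast
  with A(1) obtain A1 K where A1: "A1 \<subseteq> A" "uncountable A1" "delta_system A1 (\<lambda>p. key ` fst p) K"
    by (rule delta_system_lemma)
  obtain p0 q0 where "p0 \<in> A1" "q0 \<in> A1" "p0 \<noteq> q0" using A1(2) by (rule uncountable_two_elements)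
  with A1(3) have "K = key ` fst p0 \<inter> key ` fst q0" unfolding delta_system_def by simp
  moreover have "finite (fst p0)" using A1(1) A(2) \<open>p0 \<in> A1\<close> Pset_finite_nodes by blast
  ultimately have "finite K" by simp
  define root where "root p = {x \<in> fst p. key x \<in> K}" for p :: "('c, 'l) cond"
  from \<open>finite K\<close> have "countable (key -` K)" by (rule countable_key_vimage)
  then have "countable {S. finite S \<and> S \<subseteq> key -` K}" by (rule countable_Collect_finite_subset)
  moreover have "root p \<in> {S. finite S \<and> S \<subseteq> key -` K}" if "p \<in> A1" for p
  proof -
    from that A1(1) A(2) have "finite (fst p)" using Pset_finite_nodes by blast
    then show ?thesis unfolding root_def by auto
  qed
  ultimately obtain R where R: "uncountable {p \<in> A1. root p = R}"
    by (rule uncountable_fiber[OF A1(2), where g = root])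
  show ?thesis
  proof
    show "{p \<in> A1. root p = R} \<subseteq> A" "uncountable {p \<in> A1. root p = R}" using A1(1) R by auto
    have "{p \<in> A1. root p = R} \<noteq> {}"
    proof
      assume "{p \<in> A1. root p = R} = {}"
      with R show False by simp
    qed
    then obtain p where p: "p \<in> A1" "root p = R" by blast
    then have "finite (fst p)" using A1(1) A(2) Pset_finite_nodes by blast
    with p(2) show "finite R" unfolding root_def by auto
    show "R \<subseteq> fst p" if "p \<in> {p \<in> A1. root p = R}" for p using that unfolding root_def by blast
    fix p q x y assume "p \<in> {p \<in> A1. root p = R}" "q \<in> {p \<in> A1. root p = R}" "p \<noteq> q"
      "x \<in> fst p" "y \<in> fst q" "key x = key y"
    moreover from this(1-3) A1(3) have "key ` fst p \<inter> key ` fst q = K"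
      unfolding delta_system_def by simp
    ultimately show "x \<in> R" unfolding root_def by blast
  qed
qed

definition new_tops :: "('c, 'l) node set \<Rightarrow> ('c, 'l) cond \<Rightarrow> 'l set" where
  "new_tops R p = {z. Tp z \<in> fst p - R}"

lemma finite_new_tops: "p \<in> Pset F \<Longrightarrow> finite (new_tops R p)"
proof -
  assume "p \<in> Pset F"
  then have "finite (fst p)" by (rule Pset_finite_nodes)
  then have "finite (Tp -` fst p)" by (rule finite_vimageI) (simp add: inj_def)
  moreover have "new_tops R p \<subseteq> Tp -` fst p" unfolding new_tops_def by blast
  ultimately show ?thesis by (rule finite_subset[rotated])
qed

lemma compatible_if_common_root:
  assumes p: "p \<in> Pset F" and q: "q \<in> Pset F"
    and root: "fst p \<inter> fst q \<subseteq> R" "R \<subseteq> fst p" "R \<subseteq> fst q"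
    and trace: "trace R p = trace R q"
    and keys: "\<And>x y. x \<in> fst p \<Longrightarrow> y \<in> fst q \<Longrightarrow> key x = key y \<Longrightarrow> x \<in> R \<and> y \<in> R"
    and levels: "\<forall>g\<in>Ctbl -` lvl ` R. g \<le> \<delta>"
    and separated: "\<forall>z\<in>new_tops R p. \<forall>z'\<in>new_tops R q. \<delta> < F {z, z'}"
  shows "compatible F p q"
proof -
  obtain X le i X' le' i' where pq: "p = (X, le, i)" "q = (X', le', i')" by (cases p, cases q)
  from trace pq have trace': "trace R (X, le, i) = trace R (X', le', i')" by simp
  have "amalgamable F X le i X' le' i' \<delta>"
  proof (intro amalgamable.intro amalgamable_axioms.intro)
    show "condition F X le i" "condition F X' le' i'"
      using p q pq by (simp_all add: condition_def Pset_def)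
    show "(x, y) \<in> le \<longleftrightarrow> (x, y) \<in> le'" if "x \<in> X" "x \<in> X'" "y \<in> X" "y \<in> X'" for x y
    proof -
      from that root(1) pq have "x \<in> R" "y \<in> R" by auto
      moreover have "(x, y) \<in> le \<inter> R \<times> R \<longleftrightarrow> (x, y) \<in> le' \<inter> R \<times> R"
        by (simp only: trace_eqD(1)[OF trace'])
      ultimately show ?thesis by simp
    qed
    show "i {x, y} = i' {x, y}" if "x \<in> X" "x \<in> X'" "y \<in> X" "y \<in> X'" "x \<noteq> y" for x y
    proof -
      from that root(1) pq have "{x, y} \<subseteq> R" by auto
      then show ?thesis by (rule trace_eqD(2)[OF trace'])
    qed
    show "x \<in> X' \<and> y \<in> X" if "x \<in> X" "y \<in> X'" "blk_of x = blk_of y" "lvl x = lvl y" for x y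
      using that keys[of x y] root(2,3) pq by (auto simp: key_def)
    show "g \<le> \<delta>" if "r \<in> X" "r \<in> X'" "lvl r = Ctbl g" for r g
      using that root(1) levels pq by force
    show "\<delta> < F {z, z'}" if "Tp z \<in> X" "Tp z \<notin> X'" "Tp z' \<in> X'" "Tp z' \<notin> X" for z z'
      using that root(2,3) separated pq unfolding new_tops_def by auto
  qed
  then show ?thesis unfolding pq by (rule amalgamable.amalgam_compatible)
qed

lemma uncountable_uniform_subfamily:
  fixes F :: "'l set \<Rightarrow> 'c::wellorder" and A :: "('c, 'l) cond set"
  assumes om: "is_omega1_type TYPE('c)" and A: "uncountable A" "A \<subseteq> Pset F"
  obtains A' R m where "A' \<subseteq> A" "uncountable A'" "finite R" "\<And>p. p \<in> A' \<Longrightarrow> R \<subseteq> fst p"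
    "\<And>p q x y. p \<in> A' \<Longrightarrow> q \<in> A' \<Longrightarrow> p \<noteq> q \<Longrightarrow> x \<in> fst p \<Longrightarrow> y \<in> fst q \<Longrightarrow> key x = key y \<Longrightarrow> x \<in> R"
    "\<And>p q. p \<in> A' \<Longrightarrow> q \<in> A' \<Longrightarrow> trace R p = trace R q"
    "\<And>p. p \<in> A' \<Longrightarrow> card (new_tops R p) = m"
proof -
  obtain A1 R where A1: "A1 \<subseteq> A" "uncountable A1" "finite R" "\<And>p. p \<in> A1 \<Longrightarrow> R \<subseteq> fst p"
    and root: "\<And>p q x y. p \<in> A1 \<Longrightarrow> q \<in> A1 \<Longrightarrow> p \<noteq> q \<Longrightarrow> x \<in> fst p \<Longrightarrow> y \<in> fst q \<Longrightarrow>
      key x = key y \<Longrightarrow> x \<in> R"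
    using uncountable_common_root[OF A] by blast
  have "trace R p \<in> trace R ` {p \<in> Pset F. R \<subseteq> fst p}" if "p \<in> A1" for p
    using that A1(1,4) A(2) by blast
  then obtain t where A2: "uncountable {p \<in> A1. trace R p = t}"
    by (rule uncountable_fiber[OF A1(2) countable_traces[OF om A1(3)], where g = "trace R"])
  obtain m where A3: "uncountable {p \<in> {p \<in> A1. trace R p = t}. card (new_tops R p) = m}"
    using uncountable_fiber[OF A2, of UNIV "\<lambda>p. card (new_tops R p)"] by blast
  let ?A' = "{p \<in> {p \<in> A1. trace R p = t}. card (new_tops R p) = m}"
  show ?thesis
  proof (rule that[OF _ A3 A1(3)])
    show "?A' \<subseteq> A" using A1(1) by blast
    show "R \<subseteq> fst p" if "p \<in> ?A'" for p using that A1(4) by blast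
    show "x \<in> R" if "p \<in> ?A'" "q \<in> ?A'" "p \<noteq> q" "x \<in> fst p" "y \<in> fst q" "key x = key y"
      for p q x y using that root[of p q x y] by blast
    show "trace R p = trace R q" if "p \<in> ?A'" "q \<in> ?A'" for p q using that by simp
    show "card (new_tops R p) = m" if "p \<in> ?A'" for p using that by simp
  qed
qed

lemma finite_upper_bound: "finite (S :: 'a::linorder set) \<Longrightarrow> \<exists>b. \<forall>s\<in>S. s \<le> b"
  by (rule exI[of _ "Max (insert undefined S)"]) simp

lemma uncountable_amalgamable_subfamily:
  fixes F :: "'l set \<Rightarrow> 'c::wellorder" and A :: "('c, 'l) cond set"
  assumes om: "is_omega1_type TYPE('c)" and A: "uncountable A" "A \<subseteq> Pset F"
  obtains A' N \<delta> m where "A' \<subseteq> A" "uncountable A'"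
    "\<And>p. p \<in> A' \<Longrightarrow> finite (N p) \<and> card (N p) = m" "delta_system A' N {}"
    "\<And>p q. p \<in> A' \<Longrightarrow> q \<in> A' \<Longrightarrow> p \<noteq> q \<Longrightarrow> \<forall>\<alpha>\<in>N p. \<forall>\<beta>\<in>N q. \<delta> < F {\<alpha>, \<beta>} \<Longrightarrow>
      compatible F p q"
proof (rule uncountable_uniform_subfamily[OF om A])
  fix A' R m
  assume A': "A' \<subseteq> A" "uncountable A'" "finite R" "\<And>p. p \<in> A' \<Longrightarrow> R \<subseteq> fst p"
    and root: "\<And>p q x y. p \<in> A' \<Longrightarrow> q \<in> A' \<Longrightarrow> p \<noteq> q \<Longrightarrow> x \<in> fst p \<Longrightarrow> y \<in> fst q \<Longrightarrow>
      key x = key y \<Longrightarrow> x \<in> R"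
    and trace: "\<And>p q. p \<in> A' \<Longrightarrow> q \<in> A' \<Longrightarrow> trace R p = trace R q"
    and card: "\<And>p. p \<in> A' \<Longrightarrow> card (new_tops R p) = m"
  have "finite (Ctbl -` lvl ` R)"
    using A'(3) by (intro finite_vimageI finite_imageI) (simp_all add: inj_def)
  then obtain \<delta> where \<delta>: "\<forall>g\<in>Ctbl -` lvl ` R. g \<le> \<delta>"
    using finite_upper_bound by blast
  show thesis
  proof (rule that[OF A'(1,2)])
    show "finite (new_tops R p) \<and> card (new_tops R p) = m" if "p \<in> A'" for p
      using that A'(1) A(2) finite_new_tops card by blast
    show "delta_system A' (new_tops R) {}"
      unfolding delta_system_def
    proof (intro ballI impI)
      fix p q assume "p \<in> A'" "q \<in> A'" "p \<noteq> q"
      then have "Tp z \<in> R" if "Tp z \<in> fst p" "Tp z \<in> fst q" for z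
        using root that by blast
      then show "new_tops R p \<inter> new_tops R q = {}" unfolding new_tops_def by blast
    qed
    fix p q assume pq: "p \<in> A'" "q \<in> A'" "p \<noteq> q"
      and separated: "\<forall>\<alpha>\<in>new_tops R p. \<forall>\<beta>\<in>new_tops R q. \<delta> < F {\<alpha>, \<beta>}"
    show "compatible F p q"
    proof (rule compatible_if_common_root[OF _ _ _ _ _ trace[OF pq(1,2)] _ \<delta> separated])
      show "p \<in> Pset F" "q \<in> Pset F" using pq A'(1) A(2) by auto
      show "fst p \<inter> fst q \<subseteq> R" using root[OF pq] by blast
      show "R \<subseteq> fst p" "R \<subseteq> fst q" using A'(4) pq by auto
      show "x \<in> R \<and> y \<in> R" if "x \<in> fst p" "y \<in> fst q" "key x = key y" for x y
        using root[OF pq that] root[OF pq(2,1) pq(3)[symmetric] that(2,1) that(3)[symmetric]] by simp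
    qed
  qed
qed

theorem lemma3p9:
  fixes F :: "'l set \<Rightarrow> 'c::wellorder"
  assumes "is_omega1_type TYPE('c)"
    and "ordLeq3 (cardSuc (cardSuc (cardSuc natLeq))) (card_of (UNIV :: 'l set))"
    and "strongly_unbounded F"
  shows "ccc F"
  unfolding ccc_def
proof (intro allI impI)
  fix A :: "('c, 'l) cond set"
  assume A: "A \<subseteq> Pset F" and antichain: "\<forall>p\<in>A. \<forall>q\<in>A. p \<noteq> q \<longrightarrow> \<not> compatible F p q"
  show "countable A"
  proof (rule ccontr)
    assume "uncountable A"
    then show False
    proof (rule uncountable_amalgamable_subfamily[OF assms(1) _ A])
      fix A' N m \<delta>
      assume A': "A' \<subseteq> A" "uncountable A'"
        and N: "\<And>p. p \<in> A' \<Longrightarrow> finite (N p) \<and> card (N p) = m" "delta_system A' N {}"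
        and amalgamable: "\<And>p q. p \<in> A' \<Longrightarrow> q \<in> A' \<Longrightarrow> p \<noteq> q \<Longrightarrow>
          \<forall>\<alpha>\<in>N p. \<forall>\<beta>\<in>N q. \<delta> < F {\<alpha>, \<beta>} \<Longrightarrow> compatible F p q"
      obtain p q where pq: "p \<in> A'" "q \<in> A'" "p \<noteq> q" "\<forall>\<alpha>\<in>N p. \<forall>\<beta>\<in>N q. \<delta> < F {\<alpha>, \<beta>}"
        by (rule strongly_unbounded_indexed[OF assms(1,3) A'(2) N])
      then have "compatible F p q" by (rule amalgamable)
      with antichain A' pq show False by blast
    qed
  qed
qed

end
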